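(* Let $X$ be a nonnegative random variable with $X\in\mathcal{L}^{1/\theta}$ for some $0<\theta\le1$. Then (i) $\lim_{x\to\infty}e^{\varepsilon x^\theta}\mathbb{P}(X>x)=\infty$ for every $\varepsilon>0$; and (ii) $X\in\mathcal{L}^{1/\eta}$ for all $\eta$ with $1\le1/\eta<1/\theta$.
   Context: Class $\mathcal{L}$: nonnegative $Z$ with $\mathbb{P}(Z>x)>0$ for all $x\ge0$ and $\mathbb{P}(Z>x+y)/\mathbb{P}(Z>x)\to1$ as $x\to\infty$ for some (equivalently all) $y>0$. For $p\ge1$, $X\in\mathcal{L}^p$ means $X\ge0$ and $X^{1/p}\in\mathcal{L}$. *)

theory Defs
  imports "HOL-Probability.Probability"
begin

definition long_tailed :: "'a measure \<Rightarrow> ('a \<Rightarrow> real) \<Rightarrow> bool" where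
  "long_tailed M Z \<longleftrightarrow>
     (\<forall>\<omega>\<in>space M. 0 \<le> Z \<omega>) \<and>
     (\<forall>x::real. 0 \<le> x \<longrightarrow> measure M {\<omega>\<in>space M. Z \<omega> > x} > 0) \<and>
     (\<forall>y::real. 0 < y \<longrightarrow>
        ((\<lambda>x. measure M {\<omega>\<in>space M. Z \<omega> > x + y} / measure M {\<omega>\<in>space M. Z \<omega> > x})
           \<longlongrightarrow> 1) at_top)"

definition long_tailed_pow :: "'a measure \<Rightarrow> real \<Rightarrow> ('a \<Rightarrow> real) \<Rightarrow> bool" where
  "long_tailed_pow M p X \<longleftrightarrow>
     (\<forall>\<omega>\<in>space M. 0 \<le> X \<omega>) \<and> long_tailed M (\<lambda>\<omega>. X \<omega> powr (1 / p))"

end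

theory Submission
  imports Defs
begin

text \<open>Let \<open>T\<close> be the tail of the long-tailed variable \<open>Y = X powr \<theta>\<close>. The tail of \<open>X\<close> at \<open>x\<close>
  is \<open>T (x powr \<theta>)\<close> and the tail of \<open>X powr \<eta>\<close> at \<open>x\<close> is \<open>T (x powr (\<theta>/\<eta>))\<close>.
  (i) Long-tailedness gives \<open>T (u + 1) \<ge> exp (-\<epsilon>/2) * T u\<close> for large \<open>u\<close>, so \<open>T\<close> decays more
  slowly than every exponential. (ii) Since \<open>x \<mapsto> x powr r\<close> is subadditive for \<open>0 < r \<le> 1\<close>,
  \<open>T (x powr r + y powr r) \<le> T ((x + y) powr r) \<le> T (x powr r)\<close>, which squeezes the ratio of
  the composed tail to 1.\<close>

definition tail :: "'a measure \<Rightarrow> ('a \<Rightarrow> real) \<Rightarrow> real \<Rightarrow> real" where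
  "tail M Z x = measure M {\<omega>\<in>space M. Z \<omega> > x}"

definition long_tailed_fun :: "(real \<Rightarrow> real) \<Rightarrow> bool" where
  "long_tailed_fun T \<longleftrightarrow>
     (\<forall>x\<ge>0. 0 < T x) \<and> (\<forall>y>0. ((\<lambda>x. T (x + y) / T x) \<longlongrightarrow> 1) at_top)"

lemma long_tailed_iff_tail:
  "long_tailed M Z \<longleftrightarrow> (\<forall>\<omega>\<in>space M. 0 \<le> Z \<omega>) \<and> long_tailed_fun (tail M Z)"
  by (simp add: long_tailed_def long_tailed_fun_def tail_def)

lemma tail_antimono:
  assumes "finite_measure M" "Z \<in> borel_measurable M"
  shows "antimono (tail M Z)"
proof (rule antimonoI)
  fix u v :: real assume "u \<le> v"
  then show "tail M Z v \<le> tail M Z u"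
    unfolding tail_def using assms
    by (intro finite_measure.finite_measure_mono) auto
qed

lemma tail_powr:
  fixes r x :: real
  assumes "\<forall>\<omega>\<in>space M. 0 \<le> Z \<omega>" "0 < r" "0 \<le> x"
  shows "tail M (\<lambda>\<omega>. Z \<omega> powr r) (x powr r) = tail M Z x"
proof -
  have "x powr r < Z \<omega> powr r \<longleftrightarrow> x < Z \<omega>" if "\<omega> \<in> space M" for \<omega>
    using assms that by (metis less_eq_real_def not_less powr_less_mono2 powr_mono2)
  then show ?thesis
    unfolding tail_def by (metis (no_types, lifting))
qed

lemma filterlim_powr_at_top:
  fixes p :: real
  assumes "0 < p"
  shows "filterlim (\<lambda>x. x powr p) at_top at_top"
  unfolding filterlim_at_top
proof
  fix Z :: real
  show "eventually (\<lambda>x. Z \<le> x powr p) at_top"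
    using eventually_ge_at_top[of "max 1 Z powr (1 / p)"]
  proof eventually_elim
    case (elim x)
    have "Z \<le> (max 1 Z powr (1 / p)) powr p" using assms by (simp add: powr_powr)
    also have "\<dots> \<le> x powr p" using elim assms by (intro powr_mono2) auto
    finally show ?case .
  qed
qed

lemma powr_ge_base:
  fixes a r :: real
  assumes "0 \<le> a" "a \<le> 1" "0 < r" "r \<le> 1"
  shows "a \<le> a powr r"
proof (cases "a = 0")
  case False
  then have "a powr 1 \<le> a powr r" using assms by (intro powr_mono') auto
  then show ?thesis using False assms by simp
qed simp

lemma powr_add_le:
  fixes x y r :: real
  assumes "0 \<le> x" "0 \<le> y" "0 < r" "r \<le> 1"
  shows "(x + y) powr r \<le> x powr r + y powr r"
proof (cases "x + y = 0")
  case True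
  then show ?thesis using assms by simp
next
  case False
  define s where "s = x + y"
  have s: "s > 0" using False assms s_def by simp
  have "x / s \<le> (x / s) powr r" "y / s \<le> (y / s) powr r"
    using assms s s_def by (auto intro: powr_ge_base)
  moreover have "x / s + y / s = 1" using s s_def by (simp add: add_divide_distrib[symmetric])
  ultimately have "1 \<le> (x / s) powr r + (y / s) powr r" by simp
  then have "1 \<le> (x powr r + y powr r) / s powr r"
    using assms s by (simp add: powr_divide add_divide_distrib)
  then show ?thesis using s s_def by (simp add: field_simps)
qed

lemma long_tailed_fun_geometric_lower_bound:
  fixes T :: "real \<Rightarrow> real" and q :: real
  assumes "long_tailed_fun T" "0 \<le> q" "q < 1"
  obtains N where "N \<ge> 0" "\<And>k::nat. q ^ k * T N \<le> T (N + real k)"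
proof -
  have "eventually (\<lambda>u. q < T (u + 1) / T u) at_top"
    using assms by (intro order_tendstoD(1)) (auto simp: long_tailed_fun_def)
  then obtain N0 where N0: "\<And>u. u \<ge> N0 \<Longrightarrow> q < T (u + 1) / T u"
    by (auto simp: eventually_at_top_linorder)
  define N where "N = max N0 0"
  have pos: "\<And>u. 0 \<le> u \<Longrightarrow> 0 < T u" using assms(1) by (simp add: long_tailed_fun_def)
  have step: "q * T u \<le> T (u + 1)" if "u \<ge> N" for u
    using N0[of u] pos[of u] that by (simp add: N_def field_simps)
  have "q ^ k * T N \<le> T (N + real k)" for k
  proof (induction k)
    case (Suc k)
    have "q ^ Suc k * T N = q * (q ^ k * T N)" by simp
    also have "\<dots> \<le> q * T (N + real k)" using Suc assms(2) by (intro mult_left_mono)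
    also have "\<dots> \<le> T (N + real (Suc k))" using step[of "N + real k"] by (simp add: N_def ac_simps)
    finally show ?case .
  qed simp
  then show ?thesis using that[of N] by (simp add: N_def)
qed

lemma long_tailed_fun_exp_mult_at_top:
  fixes T :: "real \<Rightarrow> real" and \<epsilon> :: real
  assumes "long_tailed_fun T" "antimono T" "0 < \<epsilon>"
  shows "filterlim (\<lambda>u. exp (\<epsilon> * u) * T u) at_top at_top"
proof -
  obtain N where N: "N \<ge> 0" and geom: "\<And>k::nat. exp (-\<epsilon>/2) ^ k * T N \<le> T (N + real k)"
    using long_tailed_fun_geometric_lower_bound[OF assms(1), of "exp (-\<epsilon>/2)"] assms(3) by auto
  have TN: "0 < T N" using assms(1) N by (simp add: long_tailed_fun_def)
  define c where "c = T N * exp (\<epsilon> * (N - 1) / 2)"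
  have bound: "c * exp (\<epsilon>/2 * u) \<le> exp (\<epsilon> * u) * T u" if "u \<ge> N" for u
  proof -
    define k where "k = nat \<lceil>u - N\<rceil>"
    have k_ge: "u - N \<le> real k" and k_less: "real k < u - N + 1"
      using that ceiling_correct[of "u - N"] by (auto simp: k_def)
    have "T N * exp (-\<epsilon>/2 * (u - N + 1)) \<le> T N * exp (-\<epsilon>/2 * real k)"
      using k_less assms(3) TN by simp
    also have "\<dots> = exp (-\<epsilon>/2) ^ k * T N" by (simp add: mult.commute flip: exp_of_nat_mult)
    also have "\<dots> \<le> T (N + real k)" by (rule geom)
    also have "\<dots> \<le> T u" by (rule antimonoD[OF assms(2)]) (use k_ge in linarith)
    finally have lower: "T N * exp (-\<epsilon>/2 * (u - N + 1)) \<le> T u" .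
    have "\<epsilon> * u + -\<epsilon>/2 * (u - N + 1) = \<epsilon> * (N - 1) / 2 + \<epsilon>/2 * u"
      by (simp add: field_simps)
    then have "exp (\<epsilon> * u) * (T N * exp (-\<epsilon>/2 * (u - N + 1))) = c * exp (\<epsilon>/2 * u)"
      unfolding c_def by (metis exp_add mult.commute mult.left_commute)
    with mult_left_mono[OF lower exp_ge_zero[of "\<epsilon> * u"]] show ?thesis by linarith
  qed
  have "filterlim (\<lambda>u. \<epsilon>/2 * u) at_top at_top"
    using assms(3) by (intro filterlim_tendsto_pos_mult_at_top[OF tendsto_const] filterlim_ident) auto
  then have exp_lim: "filterlim (\<lambda>u. exp (\<epsilon>/2 * u)) at_top at_top"
    by (rule filterlim_compose[OF exp_at_top])
  have "filterlim (\<lambda>u. c * exp (\<epsilon>/2 * u)) at_top at_top"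
    by (rule filterlim_tendsto_pos_mult_at_top[OF tendsto_const _ exp_lim]) (use TN in \<open>simp add: c_def\<close>)
  then show ?thesis
    by (rule filterlim_at_top_mono) (use bound in \<open>auto simp: eventually_at_top_linorder\<close>)
qed

lemma long_tailed_fun_comp_powr:
  fixes T :: "real \<Rightarrow> real" and r :: real
  assumes "long_tailed_fun T" "antimono T" "0 < r" "r \<le> 1"
  shows "long_tailed_fun (\<lambda>x. T (x powr r))"
  unfolding long_tailed_fun_def
proof (intro conjI allI impI)
  have pos: "\<And>u. 0 \<le> u \<Longrightarrow> 0 < T u" using assms(1) by (simp add: long_tailed_fun_def)
  then show "0 < T (x powr r)" for x by simp
  fix y :: real assume "0 < y"
  have lower: "((\<lambda>x. T (x powr r + y powr r) / T (x powr r)) \<longlongrightarrow> 1) at_top"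
    using assms(1) \<open>0 < y\<close> unfolding long_tailed_fun_def
    by (intro filterlim_compose[OF _ filterlim_powr_at_top[OF assms(3)]]) auto
  show "((\<lambda>x. T ((x + y) powr r) / T (x powr r)) \<longlongrightarrow> 1) at_top"
  proof (rule tendsto_sandwich[OF _ _ lower tendsto_const])
    show "eventually (\<lambda>x. T (x powr r + y powr r) / T (x powr r) \<le> T ((x + y) powr r) / T (x powr r)) at_top"
      using eventually_ge_at_top[of 0]
    proof eventually_elim
      case (elim x)
      then have "T (x powr r + y powr r) \<le> T ((x + y) powr r)"
        using powr_add_le[of x y r] \<open>0 < y\<close> assms by (intro antimonoD[OF assms(2)]) auto
      then show ?case using pos[of "x powr r"] by (simp add: divide_right_mono)
    qed
    show "eventually (\<lambda>x. T ((x + y) powr r) / T (x powr r) \<le> 1) at_top"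
      using eventually_ge_at_top[of 0]
    proof eventually_elim
      case (elim x)
      then have "T ((x + y) powr r) \<le> T (x powr r)"
        using \<open>0 < y\<close> assms by (intro antimonoD[OF assms(2)] powr_mono2) auto
      then show ?case using pos[of "x powr r"] by simp
    qed
  qed
qed

lemma long_tailed_fun_cong:
  assumes "\<And>x. 0 \<le> x \<Longrightarrow> S x = T x" "long_tailed_fun S"
  shows "long_tailed_fun T"
  unfolding long_tailed_fun_def
proof (intro conjI allI impI)
  show "0 < T x" if "0 \<le> x" for x
    using assms that by (simp add: long_tailed_fun_def)
  fix y :: real assume "0 < y"
  then have "((\<lambda>x. S (x + y) / S x) \<longlongrightarrow> 1) at_top"
    using assms(2) by (simp add: long_tailed_fun_def)
  moreover have "eventually (\<lambda>x. S (x + y) / S x = T (x + y) / T x) at_top"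
    using eventually_ge_at_top[of 0] by eventually_elim (use assms(1) \<open>0 < y\<close> in auto)
  ultimately show "((\<lambda>x. T (x + y) / T x) \<longlongrightarrow> 1) at_top"
    by (rule filterlim_cong[OF refl refl, THEN iffD1, rotated])
qed

theorem lemmaA1:
  fixes M :: "'a measure" and X :: "'a \<Rightarrow> real" and \<theta> :: real
  assumes "prob_space M"
    and "X \<in> borel_measurable M"
    and "\<forall>\<omega>\<in>space M. 0 \<le> X \<omega>"
    and "0 < \<theta>" and "\<theta> \<le> 1"
    and "long_tailed_pow M (1 / \<theta>) X"
  shows "(\<forall>\<epsilon>::real. 0 < \<epsilon> \<longrightarrow>
            filterlim (\<lambda>x::real. exp (\<epsilon> * x powr \<theta>) * measure M {\<omega>\<in>space M. X \<omega> > x})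
              at_top at_top)
       \<and> (\<forall>\<eta>::real. 1 \<le> 1 / \<eta> \<and> 1 / \<eta> < 1 / \<theta> \<longrightarrow> long_tailed_pow M (1 / \<eta>) X)"
proof -
  interpret prob_space M by (rule assms(1))
  define Y where "Y = (\<lambda>\<omega>. X \<omega> powr \<theta>)"
  have T: "long_tailed_fun (tail M Y)"
    using assms(4,6) by (simp add: long_tailed_pow_def long_tailed_iff_tail Y_def)
  have T_anti: "antimono (tail M Y)"
    using assms(2) unfolding Y_def by (intro tail_antimono finite_measure_axioms) measurable
  show ?thesis
  proof (intro conjI allI impI)
    fix \<epsilon> :: real assume "0 < \<epsilon>"
    have "filterlim (\<lambda>x. exp (\<epsilon> * x powr \<theta>) * tail M Y (x powr \<theta>)) at_top at_top"
      by (rule filterlim_compose[OF long_tailed_fun_exp_mult_at_top[OF T T_anti \<open>0 < \<epsilon>\<close>]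
            filterlim_powr_at_top[OF assms(4)]])
    moreover have "eventually (\<lambda>x. exp (\<epsilon> * x powr \<theta>) * tail M Y (x powr \<theta>) =
        exp (\<epsilon> * x powr \<theta>) * measure M {\<omega>\<in>space M. X \<omega> > x}) at_top"
      using eventually_ge_at_top[of 0]
      by eventually_elim (use tail_powr[OF assms(3,4)] in \<open>simp add: Y_def tail_def\<close>)
    ultimately show "filterlim (\<lambda>x. exp (\<epsilon> * x powr \<theta>) * measure M {\<omega>\<in>space M. X \<omega> > x}) at_top at_top"
      by (rule filterlim_cong[OF refl refl, THEN iffD1, rotated])
  next
    fix \<eta> :: real assume \<eta>: "1 \<le> 1 / \<eta> \<and> 1 / \<eta> < 1 / \<theta>"
    have "0 < \<eta>" "\<theta> < \<eta>"
      using \<eta> assms(4) by (auto simp: field_simps le_divide_eq_1 split: if_splits)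
    then have "long_tailed_fun (\<lambda>x. tail M Y (x powr (\<theta> / \<eta>)))"
      using assms(4) by (intro long_tailed_fun_comp_powr[OF T T_anti]) auto
    moreover have "tail M Y (x powr (\<theta> / \<eta>)) = tail M (\<lambda>\<omega>. X \<omega> powr \<eta>) x" if "0 \<le> x" for x
      using tail_powr[of M "\<lambda>\<omega>. X \<omega> powr \<eta>" "\<theta> / \<eta>" x] that \<open>0 < \<eta>\<close> assms(4)
      by (simp add: Y_def powr_powr)
    ultimately have "long_tailed_fun (tail M (\<lambda>\<omega>. X \<omega> powr \<eta>))"
      by (rule long_tailed_fun_cong[rotated])
    then show "long_tailed_pow M (1 / \<eta>) X"
      using assms(3) by (simp add: long_tailed_pow_def long_tailed_iff_tail)
  qed
qed

end
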